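(* Let $\mathcal{D}$ be a distribution on $\mathbb{R}^d\times\mathbb{R}$ such that, for $(\mathbf{x},y)\sim\mathcal{D}$, $\|\mathbf{x}\|_2\le1$ and $|y|\le B$ with probability $1$, and suppose the second moments $\mathbb{E}_{\mathcal{D}}[x_i^2]$, $i\in[d]$, are known. Let $\bar{\mathbf{w}}$ be the output of DDAERR on $m$ i.i.d. examples from $\mathcal{D}$ with budget $k$, run with $\eta=\Big(m\big(\tfrac1k\|\mathbb{E}_{\mathcal{D}}[\mathbf{x}^2]\|_{1/2}+1\big)\Big)^{-1/2}$. Then for every $\mathbf{w}^*\in\mathbb{R}^d$ with $\|\mathbf{w}^*\|_2\le B$, $$\mathbb{E}_{\mathcal{D},A}\big[L_{\mathcal{D}}(\bar{\mathbf{w}})\big]\le L_{\mathcal{D}}(\mathbf{w}^* )+\frac{4B^2}{\sqrt m}\sqrt{\frac1k\|\mathbb{E}_{\mathcal{D}}[\mathbf{x}^2]\|_{1/2}+1}.$$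
   Context: Loss $\ell(\mathbf{w};\mathbf{x},y)=\frac12(\langle\mathbf{w},\mathbf{x}\rangle-y)^2$; risk $L_{\mathcal{D}}(\mathbf{w})=\mathbb{E}_{(\mathbf{x},y)\sim\mathcal{D}}[\ell(\mathbf{w};\mathbf{x},y)]$. $\mathbb{E}_{\mathcal{D}}[\mathbf{x}^2]$ is the vector with entries $\mathbb{E}_{\mathcal{D}}[x_i^2]$; for a vector $\mathbf{a}$, $\|\mathbf{a}\|_{1/2}=\big(\sum_{i=1}^d\sqrt{|a_i|}\big)^2$. Algorithm GAERR (parameters $B,\eta>0$, probabilities $q_i$ with $\sum_iq_i=1$, integer budget $k>0$; input $(\mathbf{x}_t,y_t)$, $t=1,\dots,m$): initialize $\mathbf{w}_1\ne0$, $\|\mathbf{w}_1\|_2\le B$ arbitrarily. For each $t$: for $r=1,\dots,k$ draw $i_{t,r}$ with probability $q_{i_{t,r}}$ and set $\widetilde{\mathbf{x}}_{t,r}=\frac{1}{q_{i_{t,r}}}\mathbf{x}_t[i_{t,r}]\mathbf{e}_{i_{t,r}}$; $\widetilde{\mathbf{x}}_t=\frac1k\sum_r\widetilde{\mathbf{x}}_{t,r}$; draw $j_t$ with probability $p_j=w_{t,j}^2/\|\mathbf{w}_t\|_2^2$ and set $\widetilde\phi_t=\frac{w_{t,j_t}}{p_{j_t}}\mathbf{x}_t[j_t]-y_t$; $\widetilde{\mathbf{g}}_t=\widetilde\phi_t\widetilde{\mathbf{x}}_t$; $\mathbf{v}_t=\mathbf{w}_t-\eta\widetilde{\mathbf{g}}_t$;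 $\mathbf{w}_{t+1}=\mathbf{v}_t B/\max\{\|\mathbf{v}_t\|_2,B\}$. Output $\bar{\mathbf{w}}=\frac1m\sum_{t=1}^m\mathbf{w}_t$. DDAERR is GAERR with $q_i=\sqrt{\mathbb{E}_{\mathcal{D}}[x_i^2]}\big/\sum_{j=1}^d\sqrt{\mathbb{E}_{\mathcal{D}}[x_j^2]}$. $\mathbb{E}_{\mathcal{D},A}$ is expectation over the examples and the algorithm's randomness. *)

theory Defs
  imports "HOL-Probability.Probability"
begin

definition second_moment :: "((real^'d::finite) \<times> real) measure \<Rightarrow> 'd \<Rightarrow> real" where
  "second_moment D i = (\<integral>z. (fst z $ i)^2 \<partial>D)"

definition half_norm :: "('d::finite \<Rightarrow> real) \<Rightarrow> real" where
  "half_norm a = (\<Sum>i\<in>UNIV. sqrt \<bar>a i\<bar>)^2"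

definition sq_loss :: "real^'d::finite \<Rightarrow> (real^'d) \<times> real \<Rightarrow> real" where
  "sq_loss w z = (1/2) * (w \<bullet> fst z - snd z)^2"

definition risk :: "((real^'d::finite) \<times> real) measure \<Rightarrow> real^'d \<Rightarrow> real" where
  "risk D w = (\<integral>z. sq_loss w z \<partial>D)"

primrec draws :: "'d pmf \<Rightarrow> nat \<Rightarrow> 'd list pmf" where
  "draws q 0 = return_pmf []"
| "draws q (Suc n) = bind_pmf q (\<lambda>i. map_pmf (\<lambda>is. i # is) (draws q n))"

text \<open>Distribution p_j = w_j^2 / ||w||^2 (meaningful for w \<noteq> 0).\<close>
definition weight_pmf :: "real^'d::finite \<Rightarrow> 'd pmf" where
  "weight_pmf w = embed_pmf (\<lambda>j. (w $ j)^2 / (norm w)^2)"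

text \<open>Estimate of <w,x> - y. Convention for w = 0 (not covered by the paper):
  the exact value -y is used.\<close>
definition phi_est :: "real^'d::finite \<Rightarrow> (real^'d) \<times> real \<Rightarrow> real pmf" where
  "phi_est w z = (if w = 0 then return_pmf (- snd z)
     else map_pmf (\<lambda>j. (w $ j / ((w $ j)^2 / (norm w)^2)) * (fst z $ j) - snd z) (weight_pmf w))"

definition gaerr_step ::
  "'d::finite pmf \<Rightarrow> real \<Rightarrow> real \<Rightarrow> nat \<Rightarrow> (real^'d) \<times> real \<Rightarrow> real^'d \<Rightarrow> (real^'d) pmf" where
  "gaerr_step q B \<eta> k z w =
     bind_pmf (draws q k) (\<lambda>is.
     bind_pmf (phi_est w z) (\<lambda>\<phi>.
       let xt = (1 / real k) *\<^sub>R (\<Sum>i\<leftarrow>is. ((fst z $ i) / pmf q i) *\<^sub>R axis i 1);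
           v = w - (\<eta> * \<phi>) *\<^sub>R xt
       in return_pmf ((B / max (norm v) B) *\<^sub>R v)))"

fun gaerr_iter ::
  "'d::finite pmf \<Rightarrow> real \<Rightarrow> real \<Rightarrow> nat \<Rightarrow> real^'d \<Rightarrow> ((real^'d) \<times> real) list \<Rightarrow> (real^'d) list pmf" where
  "gaerr_iter q B \<eta> k w [] = return_pmf []"
| "gaerr_iter q B \<eta> k w (z # zs) =
     bind_pmf (gaerr_step q B \<eta> k z w) (\<lambda>w'. map_pmf (\<lambda>ws. w # ws) (gaerr_iter q B \<eta> k w' zs))"

definition gaerr ::
  "'d::finite pmf \<Rightarrow> real \<Rightarrow> real \<Rightarrow> nat \<Rightarrow> real^'d \<Rightarrow> ((real^'d) \<times> real) list \<Rightarrow> (real^'d) pmf" where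
  "gaerr q B \<eta> k w1 zs = map_pmf (\<lambda>ws. (1 / real (length ws)) *\<^sub>R sum_list ws) (gaerr_iter q B \<eta> k w1 zs)"

text \<open>DDAERR sampling distribution q_i proportional to sqrt(E[x_i^2]).
  Convention: if all second moments vanish (x = 0 a.s.), the uniform distribution.\<close>
definition ddaerr_q :: "((real^'d::finite) \<times> real) measure \<Rightarrow> 'd pmf" where
  "ddaerr_q D = (let s = (\<Sum>j\<in>UNIV. sqrt (second_moment D j)) in
     if s = 0 then pmf_of_set UNIV else embed_pmf (\<lambda>i. sqrt (second_moment D i) / s))"

end

theory Submission
  imports Defs
begin

text \<open>
  Each iteration of GAERR is a projected stochastic gradient step whose update direction is an
  unbiased estimate of the loss gradient: the residual \<open>\<langle>w, x\<rangle> - y\<close> is estimated by sampling one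
  coordinate of \<open>w\<close> with probability \<open>w\<^sub>j\<^sup>2 / \<parallel>w\<parallel>\<^sup>2\<close>, and \<open>x\<close> by importance sampling \<open>k\<close> coordinates
  from \<open>q\<close>. The residual estimate has second moment at most \<open>4B\<^sup>2\<close>, the estimate of \<open>x\<close> has
  expected squared norm at most \<open>\<Sum>\<^sub>i x\<^sub>i\<^sup>2 / (k q\<^sub>i) + \<parallel>x\<parallel>\<^sup>2\<close>, and the two estimates are independent.
  The standard online gradient descent argument, with the potential \<open>\<parallel>w\<^sub>t - w\<^sup>*\<parallel>\<^sup>2 / (2\<eta>)\<close> and
  convexity of the loss, bounds the expected average risk of the iterates by
  \<open>L(w\<^sup>*) + 2\<eta>B\<^sup>2 (E[\<Sum>\<^sub>i x\<^sub>i\<^sup>2/q\<^sub>i]/k + 1) + \<parallel>w\<^sub>1 - w\<^sup>*\<parallel>\<^sup>2 / (2\<eta>m)\<close>, and Jensen's inequality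
  transfers the bound to the average iterate. For DDAERR's choice of \<open>q\<close> the expectation
  \<open>E[\<Sum>\<^sub>i x\<^sub>i\<^sup>2/q\<^sub>i]\<close> equals \<open>\<parallel>E[x\<^sup>2]\<parallel>\<^sub>1\<^sub>/\<^sub>2\<close>, and the given \<open>\<eta>\<close> balances the last two terms.
\<close>

section \<open>Importance sampling of coordinates\<close>

lemma set_pmf_draws: "set_pmf (draws q n) \<subseteq> {xs. length xs = n}"
  by (induction n) auto

lemma finite_lists_of_length: "finite {xs::'d::finite list. length xs = n}"
  using finite_lists_length_eq[of "UNIV::'d set" n] by simp

lemma finite_set_pmf_draws: "finite (set_pmf (draws (q::'d::finite pmf) n))"
  using finite_subset[OF set_pmf_draws finite_lists_of_length] .

lemma expectation_draws_Suc:
  fixes h :: "'d::finite list \<Rightarrow> 'b::{banach, second_countable_topology}"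
  shows "measure_pmf.expectation (draws q (Suc n)) h =
    (\<Sum>i\<in>UNIV. pmf q i *\<^sub>R measure_pmf.expectation (draws q n) (\<lambda>is. h (i # is)))"
  unfolding draws.simps
  by (subst pmf_expectation_bind[where A=UNIV]) (auto simp: finite_set_pmf_draws)

definition sampled_sum :: "'d::finite pmf \<Rightarrow> real^'d \<Rightarrow> 'd list \<Rightarrow> real^'d" where
  "sampled_sum q x is = (\<Sum>i\<leftarrow>is. (x $ i / pmf q i) *\<^sub>R axis i 1)"

text \<open>The mean of one sample of \<open>sampled_sum\<close>: it agrees with \<open>x\<close> on the support of \<open>q\<close> and
  vanishes outside of it.\<close>
definition support_part :: "'d::finite pmf \<Rightarrow> real^'d \<Rightarrow> real^'d" where
  "support_part q x = (\<chi> j. pmf q j * (x $ j / pmf q j))"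

definition inverse_weighted_sqnorm :: "'d::finite pmf \<Rightarrow> real^'d \<Rightarrow> real" where
  "inverse_weighted_sqnorm q x = (\<Sum>j\<in>UNIV. (x $ j)^2 / pmf q j)"

lemma sum_pmf_UNIV: "(\<Sum>i\<in>UNIV. pmf (q::'d::finite pmf) i) = 1"
  using sum_pmf_eq_1[of UNIV q] by simp

lemma sampled_sum_Cons: "sampled_sum q x (i # is) = (x $ i / pmf q i) *\<^sub>R axis i 1 + sampled_sum q x is"
  by (simp add: sampled_sum_def)

lemma sum_scaleR_axis: "(\<Sum>i\<in>UNIV. c i *\<^sub>R axis i (1::real)) = (\<chi> i. c i :: real^'d::finite)"
  by (metis (no_types, lifting) UNIV_I basis_expansion scalar_mult_eq_scaleR
    sum.cong vec_lambda_inverse)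

lemma sum_pmf_scaleR_sample: "(\<Sum>i\<in>UNIV. pmf q i *\<^sub>R ((x $ i / pmf q i) *\<^sub>R axis i 1)) = support_part q x"
  unfolding support_part_def scaleR_scaleR by (rule sum_scaleR_axis)

lemma sum_pmf_norm_sample_sq:
  "(\<Sum>i\<in>UNIV. pmf q i * (norm ((x $ i / pmf q i) *\<^sub>R axis i (1::real)))^2) = inverse_weighted_sqnorm q x"
  unfolding inverse_weighted_sqnorm_def
proof (intro sum.cong refl)
  fix i
  show "pmf q i * (norm ((x $ i / pmf q i) *\<^sub>R axis i (1::real)))^2 = (x $ i)^2 / pmf q i"
    by (cases "pmf q i = 0") (auto simp: power2_eq_square field_simps)
qed

lemma sum_pmf_inner_sample:
  "(\<Sum>i\<in>UNIV. pmf q i * (((x $ i / pmf q i) *\<^sub>R axis i 1) \<bullet> v)) = support_part q x \<bullet> v"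
proof -
  have "(\<Sum>i\<in>UNIV. pmf q i * (((x $ i / pmf q i) *\<^sub>R axis i 1) \<bullet> v)) =
     (\<Sum>i\<in>UNIV. pmf q i *\<^sub>R ((x $ i / pmf q i) *\<^sub>R axis i 1)) \<bullet> v"
    by (simp only: inner_sum_left inner_scaleR_left)
  then show ?thesis by (simp only: sum_pmf_scaleR_sample)
qed

lemma expectation_sampled_sum:
  "measure_pmf.expectation (draws q n) (sampled_sum q x) = real n *\<^sub>R support_part q x"
proof (induction n)
  case 0 then show ?case by (simp add: sampled_sum_def)
next
  case (Suc n)
  have "measure_pmf.expectation (draws q (Suc n)) (sampled_sum q x) =
     (\<Sum>i\<in>UNIV. pmf q i *\<^sub>R ((x $ i / pmf q i) *\<^sub>R axis i 1 + real n *\<^sub>R support_part q x))"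
    unfolding expectation_draws_Suc sampled_sum_Cons
    by (subst Bochner_Integration.integral_add)
       (auto simp: integrable_measure_pmf_finite finite_set_pmf_draws Suc)
  also have "\<dots> = support_part q x + real n *\<^sub>R support_part q x"
    by (simp only: scaleR_add_right sum.distrib scaleR_sum_left[symmetric] sum_pmf_scaleR_sample
        sum_pmf_UNIV scaleR_one)
  finally show ?case by (simp add: algebra_simps)
qed

lemma power2_norm_add: "(norm (a + b :: 'a::real_inner))^2 = (norm a)^2 + 2 * (a \<bullet> b) + (norm b)^2"
  by (simp add: power2_norm_eq_inner inner_add_left inner_add_right inner_commute)

text \<open>The \<open>n\<close> samples are independent, so the cross terms contribute \<open>\<parallel>E sample\<parallel>\<^sup>2\<close> each.\<close>
lemma expectation_sqnorm_sampled_sum: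
  "measure_pmf.expectation (draws q n) (\<lambda>is. (norm (sampled_sum q x is))^2)
   = real n * inverse_weighted_sqnorm q x + real n * (real n - 1) * (norm (support_part q x))^2"
proof (induction n)
  case 0 then show ?case by (simp add: sampled_sum_def)
next
  case (Suc n)
  let ?u = "\<lambda>i. (x $ i / pmf q i) *\<^sub>R axis i (1::real)"
  let ?rest = "real n * inverse_weighted_sqnorm q x + real n * (real n - 1) * (norm (support_part q x))^2"
  have "measure_pmf.expectation (draws q (Suc n)) (\<lambda>is. (norm (sampled_sum q x is))^2) =
     (\<Sum>i\<in>UNIV. pmf q i * ((norm (?u i))^2 + 2 * (?u i \<bullet> (real n *\<^sub>R support_part q x)) + ?rest))"
    unfolding expectation_draws_Suc sampled_sum_Cons power2_norm_add
    by (subst Bochner_Integration.integral_add, simp add: integrable_measure_pmf_finite finite_set_pmf_draws,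
        simp add: integrable_measure_pmf_finite finite_set_pmf_draws)+
       (simp add: integrable_measure_pmf_finite finite_set_pmf_draws Suc expectation_sampled_sum
         mult.left_commute del: norm_scaleR)
  also have "\<dots> = (\<Sum>i\<in>UNIV. pmf q i * (norm (?u i))^2)
      + 2 * (\<Sum>i\<in>UNIV. pmf q i * (?u i \<bullet> (real n *\<^sub>R support_part q x))) + (\<Sum>i\<in>UNIV. pmf q i) * ?rest"
    by (simp only: distrib_left sum.distrib sum_distrib_right sum_distrib_left mult.left_commute)
  also have "\<dots> = inverse_weighted_sqnorm q x + 2 * (support_part q x \<bullet> (real n *\<^sub>R support_part q x)) + ?rest"
    by (simp only: sum_pmf_norm_sample_sq sum_pmf_inner_sample sum_pmf_UNIV mult_1)
  finally show ?case by (simp add: power2_norm_eq_inner algebra_simps)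
qed

lemma inverse_weighted_sqnorm_nonneg: "inverse_weighted_sqnorm q x \<ge> 0"
  unfolding inverse_weighted_sqnorm_def by (intro sum_nonneg divide_nonneg_nonneg) auto

lemma norm_support_part_le: "norm (support_part q x) \<le> norm x"
proof (rule norm_le_componentwise_cart)
  fix j show "norm (support_part q x $ j) \<le> norm (x $ j)"
    by (cases "pmf q j = 0") (auto simp: support_part_def)
qed

section \<open>The estimate of the residual\<close>

lemma power2_norm_eq_sum: "(norm (w::real^'d::finite))^2 = (\<Sum>j\<in>UNIV. (w $ j)^2)"
  unfolding power2_norm_eq_inner by (simp add: inner_vec_def power2_eq_square)

definition coord_weight :: "real^'d::finite \<Rightarrow> 'd \<Rightarrow> real" where
  "coord_weight w j = (w $ j)^2 / (norm w)^2"

definition residual_sample :: "real^'d::finite \<Rightarrow> (real^'d) \<times> real \<Rightarrow> 'd \<Rightarrow> real" where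
  "residual_sample w z j = (w $ j / ((w $ j)^2 / (norm w)^2)) * (fst z $ j) - snd z"

lemma sum_coord_weight: "w \<noteq> 0 \<Longrightarrow> (\<Sum>j\<in>UNIV. coord_weight w j) = 1"
  by (simp add: coord_weight_def sum_divide_distrib[symmetric] power2_norm_eq_sum[symmetric])

lemma pmf_weight_pmf:
  assumes "w \<noteq> 0" shows "pmf (weight_pmf w) j = coord_weight w j"
  unfolding weight_pmf_def coord_weight_def
proof (rule pmf_embed_pmf)
  have "(\<Sum>j\<in>UNIV. (w $ j)^2 / (norm w)^2) = 1"
    using sum_coord_weight[OF assms] by (simp add: coord_weight_def)
  then show "(\<integral>\<^sup>+ x. ennreal ((w $ x)\<^sup>2 / (norm w)\<^sup>2) \<partial>count_space UNIV) = 1"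
    by (simp add: nn_integral_count_space_finite sum_nonneg)
qed simp

lemma expectation_phi_est:
  fixes f :: "real \<Rightarrow> real"
  shows "measure_pmf.expectation (phi_est w z) f =
    (if w = 0 then f (- snd z) else (\<Sum>j\<in>UNIV. coord_weight w j * f (residual_sample w z j)))"
proof (cases "w = 0")
  case True then show ?thesis by (simp add: phi_est_def)
next
  case False
  then show ?thesis
    unfolding phi_est_def
    by (simp, subst integral_measure_pmf_real[where A=UNIV])
       (auto simp: pmf_weight_pmf residual_sample_def mult.commute)
qed

lemma coord_weight_mult: "coord_weight w j * (w $ j / ((w $ j)^2 / (norm w)^2)) = w $ j"
  by (cases "w $ j = 0") (auto simp: coord_weight_def)

lemma expectation_phi_est_id: "measure_pmf.expectation (phi_est w z) (\<lambda>\<phi>. \<phi>) = w \<bullet> fst z - snd z"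
proof (cases "w = 0")
  case True then show ?thesis by (simp add: expectation_phi_est)
next
  case False
  have "(\<Sum>j\<in>UNIV. coord_weight w j * residual_sample w z j)
      = (\<Sum>j\<in>UNIV. (coord_weight w j * (w $ j / ((w $ j)^2 / (norm w)^2))) * fst z $ j)
        - (\<Sum>j\<in>UNIV. coord_weight w j) * snd z"
    by (simp add: residual_sample_def right_diff_distrib sum_subtractf sum_distrib_right mult.assoc)
  also have "\<dots> = (\<Sum>j\<in>UNIV. w $ j * fst z $ j) - 1 * snd z"
    by (simp only: coord_weight_mult sum_coord_weight[OF False])
  also have "\<dots> = w \<bullet> fst z - snd z"
    by (simp add: inner_vec_def)
  finally show ?thesis using False by (simp add: expectation_phi_est)
qed

lemma coord_weight_mult_sq_le: "coord_weight w j * (w $ j / ((w $ j)^2 / (norm w)^2) * c)^2 \<le> (norm w)^2 * c^2"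
proof (cases "w $ j = 0")
  case True then show ?thesis by (simp add: coord_weight_def)
next
  case False
  then have "w \<noteq> 0" by auto
  with False show ?thesis by (simp add: coord_weight_def power2_eq_square field_simps)
qed

lemma sum_coord_weight_residual_sample_sq_le:
  assumes "w \<noteq> 0"
  shows "(\<Sum>j\<in>UNIV. coord_weight w j * (residual_sample w z j)^2)
    \<le> (norm w * norm (fst z) + \<bar>snd z\<bar>)^2"
proof -
  let ?a = "\<lambda>j. w $ j / ((w $ j)^2 / (norm w)^2) * fst z $ j"
  have "(\<Sum>j\<in>UNIV. coord_weight w j * (residual_sample w z j)^2) =
      (\<Sum>j\<in>UNIV. coord_weight w j * (?a j)^2) - 2 * snd z * (\<Sum>j\<in>UNIV. coord_weight w j * ?a j)
      + (\<Sum>j\<in>UNIV. coord_weight w j) * (snd z)^2"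
    by (simp add: residual_sample_def power2_diff algebra_simps sum.distrib sum_subtractf
        sum_distrib_left sum_distrib_right)
  also have "(\<Sum>j\<in>UNIV. coord_weight w j * ?a j) = w \<bullet> fst z"
    by (simp only: coord_weight_mult inner_vec_def mult.assoc[symmetric] inner_real_def)
  also have "(\<Sum>j\<in>UNIV. coord_weight w j * (?a j)^2) \<le> (\<Sum>j\<in>UNIV. (norm w)^2 * (fst z $ j)^2)"
    by (intro sum_mono coord_weight_mult_sq_le)
  also have "\<dots> = (norm w)^2 * (norm (fst z))^2"
    by (simp add: power2_norm_eq_sum[of "fst z"] sum_distrib_left)
  finally have "(\<Sum>j\<in>UNIV. coord_weight w j * (residual_sample w z j)^2)
      \<le> (norm w)^2 * (norm (fst z))^2 - 2 * snd z * (w \<bullet> fst z) + (snd z)^2"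
    using assms by (simp add: sum_coord_weight)
  moreover have "- (snd z * (w \<bullet> fst z)) \<le> \<bar>snd z\<bar> * (norm w * norm (fst z))"
    using Cauchy_Schwarz_ineq2[of w "fst z"]
    by (metis abs_ge_zero abs_le_D2 abs_mult mult_left_mono)
  ultimately show ?thesis by (simp add: power2_sum algebra_simps)
qed

lemma expectation_phi_est_sq_le:
  assumes "norm w \<le> B" "norm (fst z) \<le> 1" "\<bar>snd z\<bar> \<le> B"
  shows "measure_pmf.expectation (phi_est w z) (\<lambda>\<phi>. \<phi>^2) \<le> 4 * B^2"
proof (cases "w = 0")
  case True
  have "(snd z)^2 \<le> B^2" using assms(3) by (metis abs_ge_zero power2_abs power_mono)
  moreover have "0 \<le> B^2" by simp
  ultimately have "(snd z)^2 \<le> 4 * B^2" by linarith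
  then show ?thesis using True by (simp add: expectation_phi_est)
next
  case False
  have "norm w * norm (fst z) \<le> B"
    using assms mult_mono[of "norm w" B "norm (fst z)" 1] by simp
  then have "(norm w * norm (fst z) + \<bar>snd z\<bar>)^2 \<le> (B + B)^2"
    using assms(3) by (intro power_mono add_mono) auto
  then show ?thesis
    using sum_coord_weight_residual_sample_sq_le[OF False, of z] False
    by (simp add: expectation_phi_est power2_eq_square)
qed

lemma finite_set_pmf_phi_est: "finite (set_pmf (phi_est (w::real^'d::finite) z))"
  by (auto simp: phi_est_def intro: finite_subset[of _ "UNIV::'d set"])

section \<open>One step of the algorithm\<close>

definition project_ball :: "real \<Rightarrow> 'a::real_normed_vector \<Rightarrow> 'a" where
  "project_ball B v = (B / max (norm v) B) *\<^sub>R v"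

lemma norm_project_ball_le: "B > 0 \<Longrightarrow> norm (project_ball B v) \<le> B"
  by (cases "norm v \<le> B") (auto simp: project_ball_def max_def)

lemma power2_norm_project_ball_diff_le:
  fixes v u :: "'a::real_inner"
  assumes "B > 0" "norm u \<le> B"
  shows "(norm (project_ball B v - u))^2 \<le> (norm (v - u))^2"
proof (cases "norm v \<le> B")
  case True then show ?thesis using assms by (simp add: project_ball_def max_def)
next
  case False
  define c where "c = B / norm v"
  have nv: "norm v > B" using False by simp
  then have c: "0 < c" "c < 1" using assms by (auto simp: c_def divide_less_eq intro!: divide_pos_pos)
  have proj: "project_ball B v = c *\<^sub>R v" using nv by (simp add: project_ball_def c_def max_def)
  have "v \<bullet> u \<le> norm v * norm u" by (rule norm_cauchy_schwarz)
  also have "\<dots> \<le> norm v * B" using assms(2) by (rule mult_left_mono) simp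
  finally have cs: "v \<bullet> u \<le> norm v * B" .
  have cv: "c * norm v = B" using nv assms by (auto simp: c_def)
  have "(norm (v - u))^2 - (norm (c *\<^sub>R v - u))^2 = (1 - c) * ((1 + c) * (norm v)^2 - 2 * (v \<bullet> u))"
    by (simp add: power2_norm_eq_inner inner_commute[of u v] algebra_simps)
  also have "\<dots> \<ge> 0"
  proof -
    have "(1 + c) * (norm v)^2 - 2 * (v \<bullet> u) \<ge> norm v * (norm v - B)"
      using cs cv by (simp add: power2_eq_square algebra_simps)
    moreover have "norm v * (norm v - B) \<ge> 0" using nv assms by simp
    ultimately show ?thesis using c by (intro mult_nonneg_nonneg) auto
  qed
  finally show ?thesis unfolding proj by simp
qed

definition sgd_update :: "'d::finite pmf \<Rightarrow> real \<Rightarrow> nat \<Rightarrow> (real^'d) \<times> real \<Rightarrow> real^'d \<Rightarrow> 'd list \<Rightarrow> real \<Rightarrow> real^'d" where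
  "sgd_update q \<eta> k z w is \<phi> = w - (\<eta> * \<phi>) *\<^sub>R ((1 / real k) *\<^sub>R sampled_sum q (fst z) is)"

definition sgd_step :: "'d::finite pmf \<Rightarrow> real \<Rightarrow> real \<Rightarrow> nat \<Rightarrow> (real^'d) \<times> real \<Rightarrow> real^'d \<Rightarrow> 'd list \<Rightarrow> real \<Rightarrow> real^'d" where
  "sgd_step q B \<eta> k z w is \<phi> = project_ball B (sgd_update q \<eta> k z w is \<phi>)"

lemma gaerr_step_eq_bind: "gaerr_step q B \<eta> k z w =
  bind_pmf (draws q k) (\<lambda>is. bind_pmf (phi_est w z) (\<lambda>\<phi>. return_pmf (sgd_step q B \<eta> k z w is \<phi>)))"
  by (simp add: gaerr_step_def sgd_step_def sgd_update_def project_ball_def sampled_sum_def Let_def)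

lemma norm_le_if_in_set_pmf_gaerr_step: "B > 0 \<Longrightarrow> w' \<in> set_pmf (gaerr_step q B \<eta> k z w) \<Longrightarrow> norm w' \<le> B"
  by (auto simp: gaerr_step_eq_bind sgd_step_def intro: norm_project_ball_le)

lemma length_if_in_set_pmf_gaerr_iter: "ws \<in> set_pmf (gaerr_iter q B \<eta> k w zs) \<Longrightarrow> length ws = length zs"
  by (induction zs arbitrary: w ws) auto

lemma power2_norm_sgd_update_diff:
  "(norm (sgd_update q \<eta> k z w is \<phi> - u))^2 = (norm (w - u))^2
     - (2 * \<eta> / real k * (sampled_sum q (fst z) is \<bullet> (w - u))) * \<phi>
     + ((\<eta> / real k)^2 * (norm (sampled_sum q (fst z) is))^2) * \<phi>^2"
proof -
  have "sgd_update q \<eta> k z w is \<phi> - u = (w - u) + (- (\<eta> * \<phi> / real k)) *\<^sub>R sampled_sum q (fst z) is"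
    by (simp add: sgd_update_def algebra_simps)
  then show ?thesis
    by (simp only: power2_norm_add inner_scaleR_right norm_scaleR power_mult_distrib inner_commute[of "w - u"])
       (simp add: power2_eq_square field_simps)
qed

lemma nn_integral_gaerr_step_le:
  assumes "B > 0" "norm u \<le> B"
  shows "(\<integral>\<^sup>+w'. ennreal ((norm (w' - u))^2) \<partial>gaerr_step q B \<eta> k z w) \<le>
    ennreal (measure_pmf.expectation (draws q k) (\<lambda>is. measure_pmf.expectation (phi_est w z)
      (\<lambda>\<phi>. (norm (sgd_update q \<eta> k z w is \<phi> - u))^2)))"
proof -
  have "(\<integral>\<^sup>+w'. ennreal ((norm (w' - u))^2) \<partial>gaerr_step q B \<eta> k z w) =
     (\<integral>\<^sup>+is. \<integral>\<^sup>+\<phi>. ennreal ((norm (sgd_step q B \<eta> k z w is \<phi> - u))^2) \<partial>phi_est w z \<partial>draws q k)"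
    by (simp add: gaerr_step_eq_bind)
  also have "\<dots> \<le> (\<integral>\<^sup>+is. \<integral>\<^sup>+\<phi>. ennreal ((norm (sgd_update q \<eta> k z w is \<phi> - u))^2) \<partial>phi_est w z \<partial>draws q k)"
    unfolding sgd_step_def
    by (intro nn_integral_mono ennreal_leI power2_norm_project_ball_diff_le assms)
  also have "\<dots> = (\<integral>\<^sup>+is. ennreal (measure_pmf.expectation (phi_est w z)
      (\<lambda>\<phi>. (norm (sgd_update q \<eta> k z w is \<phi> - u))^2)) \<partial>draws q k)"
    by (intro nn_integral_cong nn_integral_eq_integral)
       (auto simp: integrable_measure_pmf_finite finite_set_pmf_phi_est)
  also have "\<dots> = ennreal (measure_pmf.expectation (draws q k) (\<lambda>is. measure_pmf.expectation (phi_est w z)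
      (\<lambda>\<phi>. (norm (sgd_update q \<eta> k z w is \<phi> - u))^2)))"
    by (intro nn_integral_eq_integral)
       (auto simp: integrable_measure_pmf_finite finite_set_pmf_draws intro!: integral_nonneg_AE)
  finally show ?thesis .
qed

lemma expectation_phi_est_quadratic:
  "measure_pmf.expectation (phi_est w z) (\<lambda>\<phi>. a - b * \<phi> + c * \<phi>^2) =
   a - b * measure_pmf.expectation (phi_est w z) (\<lambda>\<phi>. \<phi>) + c * measure_pmf.expectation (phi_est w z) (\<lambda>\<phi>. \<phi>^2)"
  by (simp add: integrable_measure_pmf_finite finite_set_pmf_phi_est)

lemma expectation_draws_quadratic:
  "measure_pmf.expectation (draws q n) (\<lambda>is. a - b * (sampled_sum q x is \<bullet> d) + c * (norm (sampled_sum q x is))^2) =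
   a - b * (measure_pmf.expectation (draws q n) (sampled_sum q x) \<bullet> d)
     + c * measure_pmf.expectation (draws q n) (\<lambda>is. (norm (sampled_sum q x is))^2)"
proof -
  have int: "integrable (measure_pmf (draws q n)) f" for f :: "_ \<Rightarrow> 'b::{banach, second_countable_topology}"
    by (simp add: integrable_measure_pmf_finite finite_set_pmf_draws)
  have "measure_pmf.expectation (draws q n) (\<lambda>is. sampled_sum q x is \<bullet> d)
      = measure_pmf.expectation (draws q n) (sampled_sum q x) \<bullet> d"
    using integral_inner_right[of d "measure_pmf (draws q n)" "sampled_sum q x", OF int]
    by (simp add: inner_commute)
  then show ?thesis
    by (simp add: int)
qed

text \<open>The residual estimate is independent of the coordinate samples, so its first two moments
  factor out of the expectation.\<close>
lemma expectation_sgd_update_diff: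
  assumes "k > 0"
  shows "measure_pmf.expectation (draws q k) (\<lambda>is. measure_pmf.expectation (phi_est w z)
      (\<lambda>\<phi>. (norm (sgd_update q \<eta> k z w is \<phi> - u))^2))
    = (norm (w - u))^2 - 2 * \<eta> * ((w \<bullet> fst z - snd z) * (support_part q (fst z) \<bullet> (w - u)))
      + \<eta>^2 * measure_pmf.expectation (phi_est w z) (\<lambda>\<phi>. \<phi>^2)
        * (inverse_weighted_sqnorm q (fst z) / real k
           + (real k - 1) / real k * (norm (support_part q (fst z)))^2)"
proof -
  define e1 where "e1 = measure_pmf.expectation (phi_est w z) (\<lambda>\<phi>. \<phi>)"
  define e2 where "e2 = measure_pmf.expectation (phi_est w z) (\<lambda>\<phi>. \<phi>^2)"
  have inner: "measure_pmf.expectation (phi_est w z) (\<lambda>\<phi>. (norm (sgd_update q \<eta> k z w is \<phi> - u))^2)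
      = (norm (w - u))^2 - (2 * \<eta> / real k * e1) * (sampled_sum q (fst z) is \<bullet> (w - u))
        + ((\<eta> / real k)^2 * e2) * (norm (sampled_sum q (fst z) is))^2" for "is"
    unfolding power2_norm_sgd_update_diff expectation_phi_est_quadratic e1_def e2_def by (simp only: mult_ac)
  have "measure_pmf.expectation (draws q k) (\<lambda>is. measure_pmf.expectation (phi_est w z)
      (\<lambda>\<phi>. (norm (sgd_update q \<eta> k z w is \<phi> - u))^2))
    = (norm (w - u))^2 - (2 * \<eta> / real k * e1) * ((real k *\<^sub>R support_part q (fst z)) \<bullet> (w - u))
      + ((\<eta> / real k)^2 * e2) * (real k * inverse_weighted_sqnorm q (fst z)
        + real k * (real k - 1) * (norm (support_part q (fst z)))^2)"
    unfolding inner expectation_draws_quadratic expectation_sampled_sum expectation_sqnorm_sampled_sum ..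
  also have "\<dots> = (norm (w - u))^2 - 2 * \<eta> * (e1 * (support_part q (fst z) \<bullet> (w - u)))
      + \<eta>^2 * e2 * (inverse_weighted_sqnorm q (fst z) / real k
        + (real k - 1) / real k * (norm (support_part q (fst z)))^2)"
    using assms by (simp add: power2_eq_square field_simps)
  finally show ?thesis by (simp only: e1_def e2_def expectation_phi_est_id)
qed

definition step_bound :: "'d::finite pmf \<Rightarrow> real \<Rightarrow> real \<Rightarrow> nat \<Rightarrow> real^'d \<Rightarrow> real^'d \<Rightarrow> (real^'d) \<times> real \<Rightarrow> real" where
  "step_bound q B \<eta> k u w z = (norm (w - u))^2 - 2 * \<eta> * ((w \<bullet> fst z - snd z) * (support_part q (fst z) \<bullet> (w - u)))
     + \<eta>^2 * (4 * B^2) * (inverse_weighted_sqnorm q (fst z) / real k + (norm (fst z))^2)"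

lemma expectation_sgd_update_diff_le:
  assumes "norm w \<le> B" "norm (fst z) \<le> 1" "\<bar>snd z\<bar> \<le> B" "k > 0"
  shows "measure_pmf.expectation (draws q k) (\<lambda>is. measure_pmf.expectation (phi_est w z)
      (\<lambda>\<phi>. (norm (sgd_update q \<eta> k z w is \<phi> - u))^2)) \<le> step_bound q B \<eta> k u w z"
proof -
  let ?A = "inverse_weighted_sqnorm q (fst z) / real k"
  let ?e2 = "measure_pmf.expectation (phi_est w z) (\<lambda>\<phi>. \<phi>^2)"
  have e2: "0 \<le> ?e2" "?e2 \<le> 4 * B^2"
    by (intro integral_nonneg_AE AE_I2, simp) (rule expectation_phi_est_sq_le[OF assms(1-3)])
  have A: "0 \<le> ?A" by (intro divide_nonneg_nonneg inverse_weighted_sqnorm_nonneg) simp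
  have "(real k - 1) / real k * (norm (support_part q (fst z)))^2 \<le> 1 * (norm (fst z))^2"
    using assms(4) norm_support_part_le by (intro mult_mono power_mono) auto
  then have "?e2 * (?A + (real k - 1) / real k * (norm (support_part q (fst z)))^2)
      \<le> (4 * B^2) * (?A + (norm (fst z))^2)"
    using e2 A assms(4) by (intro mult_mono add_mono) auto
  then show ?thesis
    unfolding expectation_sgd_update_diff[OF assms(4)] step_bound_def
    by (simp add: mult.assoc mult_left_mono)
qed

lemma step_bound_nonneg:
  assumes "norm w \<le> B" "norm (fst z) \<le> 1" "\<bar>snd z\<bar> \<le> B" "k > 0"
  shows "0 \<le> step_bound q B \<eta> k u w z"
proof -
  have "0 \<le> measure_pmf.expectation (draws q k) (\<lambda>is. measure_pmf.expectation (phi_est w z)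
      (\<lambda>\<phi>. (norm (sgd_update q \<eta> k z w is \<phi> - u))^2))"
    by (intro integral_nonneg_AE AE_I2) simp
  then show ?thesis using expectation_sgd_update_diff_le[OF assms] by (rule order_trans)
qed

lemma nn_integral_affine_le:
  fixes p :: "'a pmf"
  assumes "(\<integral>\<^sup>+x. ennreal (f x) \<partial>p) \<le> ennreal R" "\<And>x. f x \<ge> 0" "K \<ge> 0" "c \<ge> 0" "R \<ge> 0"
  shows "(\<integral>\<^sup>+x. ennreal (K + c * f x) \<partial>p) \<le> ennreal (K + c * R)"
proof -
  have "(\<integral>\<^sup>+x. ennreal (K + c * f x) \<partial>p) = (\<integral>\<^sup>+x. ennreal K + ennreal c * ennreal (f x) \<partial>p)"
    using assms by (intro nn_integral_cong) (simp add: ennreal_mult)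
  also have "\<dots> = ennreal K + ennreal c * (\<integral>\<^sup>+x. ennreal (f x) \<partial>p)"
    by (simp add: nn_integral_add nn_integral_cmult measure_pmf.emeasure_space_1)
  also have "\<dots> \<le> ennreal K + ennreal c * ennreal R"
    using assms(1) by (intro add_left_mono mult_left_mono) auto
  also have "\<dots> = ennreal (K + c * R)"
    using assms by (simp add: ennreal_mult)
  finally show ?thesis .
qed

lemma nn_integral_gaerr_step_affine_le:
  assumes "B > 0" "norm u \<le> B" "norm w \<le> B" "norm (fst z) \<le> 1" "\<bar>snd z\<bar> \<le> B" "k > 0"
    and "K \<ge> 0" "c \<ge> 0"
  shows "(\<integral>\<^sup>+w'. ennreal (K + c * (norm (w' - u))^2) \<partial>gaerr_step q B \<eta> k z w)
    \<le> ennreal (K + c * step_bound q B \<eta> k u w z)"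
proof (rule nn_integral_affine_le)
  show "(\<integral>\<^sup>+w'. ennreal ((norm (w' - u))^2) \<partial>gaerr_step q B \<eta> k z w) \<le> ennreal (step_bound q B \<eta> k u w z)"
    using nn_integral_gaerr_step_le[OF assms(1,2), of q \<eta> k z w]
      expectation_sgd_update_diff_le[OF assms(3-6), of q \<eta> u]
    by (auto intro: order_trans ennreal_leI)
qed (use step_bound_nonneg[OF assms(3-6)] assms(7,8) in auto)

section \<open>Measurability\<close>

lemma borel_measurable_vec_nth[measurable]: "(\<lambda>x::real^'d::finite. x $ j) \<in> borel_measurable borel"
  by (intro borel_measurable_continuous_onI continuous_intros)

lemma borel_measurable_residual_sample:
  "(\<lambda>(w, z). residual_sample w z j) \<in> borel_measurable (borel \<Otimes>\<^sub>M (borel \<Otimes>\<^sub>M borel))"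
  unfolding residual_sample_def by measurable

lemma borel_measurable_coord_weight: "(\<lambda>w. coord_weight w j) \<in> borel_measurable borel"
  unfolding coord_weight_def by measurable

lemma continuous_on_sampled_sum: "continuous_on UNIV (\<lambda>x. sampled_sum q x is)"
proof (induction "is")
  case Nil then show ?case by (simp add: sampled_sum_def)
next
  case (Cons i "is")
  then show ?case unfolding sampled_sum_Cons divide_inverse by (intro continuous_intros) auto
qed

lemma continuous_on_sgd_step:
  assumes "B > 0"
  shows "continuous_on UNIV (\<lambda>(z, w, \<phi>). sgd_step q B \<eta> k z w is \<phi>)"
  unfolding sgd_step_def sgd_update_def project_ball_def split_beta
  using assms by (intro continuous_intros continuous_on_compose2[OF continuous_on_sampled_sum]) auto

definition phi_est_nn_sum :: "(real \<Rightarrow> ennreal) \<Rightarrow> real^'d::finite \<Rightarrow> (real^'d) \<times> real \<Rightarrow> ennreal" where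
  "phi_est_nn_sum g w z =
     (if w = 0 then g (- snd z) else (\<Sum>j\<in>UNIV. ennreal (coord_weight w j) * g (residual_sample w z j)))"

lemma nn_integral_phi_est: "(\<integral>\<^sup>+\<phi>. g \<phi> \<partial>phi_est w z) = phi_est_nn_sum g w z"
proof (cases "w = 0")
  case True then show ?thesis by (simp add: phi_est_def phi_est_nn_sum_def)
next
  case False
  then show ?thesis
    unfolding phi_est_def phi_est_nn_sum_def
    by (simp, subst nn_integral_measure_pmf_support[where A=UNIV])
       (auto simp: pmf_weight_pmf residual_sample_def mult.commute)
qed

lemma nn_integral_draws:
  "(\<integral>\<^sup>+is. G is \<partial>draws (q::'d::finite pmf) k) = (\<Sum>is\<in>{xs. length xs = k}. ennreal (pmf (draws q k) is) * G is)"
  by (subst nn_integral_measure_pmf_support[where A="{xs. length xs = k}"])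
     (use set_pmf_draws[of q k] in \<open>auto simp: finite_lists_of_length mult.commute\<close>)

lemma nn_integral_gaerr_step: "(\<integral>\<^sup>+w'. h w' \<partial>gaerr_step q B \<eta> k z w) =
  (\<Sum>is\<in>{xs. length xs = k}. ennreal (pmf (draws q k) is) * phi_est_nn_sum (\<lambda>\<phi>. h (sgd_step q B \<eta> k z w is \<phi>)) w z)"
  by (simp add: gaerr_step_eq_bind nn_integral_draws nn_integral_phi_est)

lemma borel_measurable_sgd_step:
  "B > 0 \<Longrightarrow> (\<lambda>x. sgd_step q B \<eta> k (fst x) (fst (snd x)) is (snd (snd x))) \<in> borel_measurable (borel \<Otimes>\<^sub>M (borel \<Otimes>\<^sub>M borel))"
proof -
  assume "B > 0"
  have "(\<lambda>(z, w, \<phi>). sgd_step q B \<eta> k z w is \<phi>) = (\<lambda>x. sgd_step q B \<eta> k (fst x) (fst (snd x)) is (snd (snd x)))"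
    by (rule ext) (simp add: split_beta)
  then show ?thesis
    using borel_measurable_continuous_onI[OF continuous_on_sgd_step[OF \<open>B > 0\<close>, of q \<eta> k "is"]]
    by (simp add: borel_prod)
qed

lemma borel_measurable_nn_integral_gaerr_step:
  fixes H :: "real^'d::finite \<Rightarrow> 'a \<Rightarrow> ennreal"
  assumes B: "B > 0" and H[measurable]: "(\<lambda>(w', y). H w' y) \<in> borel_measurable (borel \<Otimes>\<^sub>M N)"
    and Z[measurable]: "Zf \<in> measurable N borel"
  shows "(\<lambda>(w, y). \<integral>\<^sup>+w'. H w' y \<partial>gaerr_step q B \<eta> k (Zf y) w) \<in> borel_measurable (borel \<Otimes>\<^sub>M N)"
proof -
  have S[measurable]: "(\<lambda>x. sgd_step q B \<eta> k (fst x) (fst (snd x)) is (snd (snd x)))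
      \<in> borel_measurable (borel \<Otimes>\<^sub>M (borel \<Otimes>\<^sub>M borel))" for "is"
    using borel_measurable_sgd_step[OF B] .
  have R[measurable]: "(\<lambda>x. residual_sample (fst x) (snd x) j) \<in> borel_measurable (borel \<Otimes>\<^sub>M borel)" for j :: 'd
  proof -
    have "(\<lambda>(w, z). residual_sample w z j) = (\<lambda>x. residual_sample (fst x) (snd x) j)"
      by (rule ext) (simp add: split_beta)
    then show ?thesis using borel_measurable_residual_sample[of j] by (simp add: borel_prod)
  qed
  have W[measurable]: "(\<lambda>w. coord_weight w j) \<in> borel_measurable borel" for j :: 'd
    by (rule borel_measurable_coord_weight)
  have snd_borel: "(\<lambda>z::(real^'d) \<times> real. snd z) \<in> borel_measurable borel"
    by (intro borel_measurable_continuous_onI continuous_intros)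
  have [measurable]: "(\<lambda>x. snd (Zf (snd x))) \<in> borel_measurable (borel \<Otimes>\<^sub>M N)"
    using measurable_compose[OF _ snd_borel, of "\<lambda>x. Zf (snd x)"] by measurable
  have "(\<lambda>x. (fst x, Zf (snd x))) \<in> measurable (borel \<Otimes>\<^sub>M N) (borel \<Otimes>\<^sub>M borel)"
    by measurable
  from measurable_compose[OF this R]
  have [measurable]: "(\<lambda>x. residual_sample (fst x) (Zf (snd x)) j) \<in> borel_measurable (borel \<Otimes>\<^sub>M N)" for j
    by simp
  have "(\<lambda>x. (Zf (snd x), fst x, residual_sample (fst x) (Zf (snd x)) j))
      \<in> measurable (borel \<Otimes>\<^sub>M N) (borel \<Otimes>\<^sub>M (borel \<Otimes>\<^sub>M borel))" for j
    by measurable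
  from measurable_compose[OF this S]
  have [measurable]: "(\<lambda>x. sgd_step q B \<eta> k (Zf (snd x)) (fst x) is (residual_sample (fst x) (Zf (snd x)) j))
      \<in> borel_measurable (borel \<Otimes>\<^sub>M N)" for "is" j
    by simp
  have "(\<lambda>x. (Zf (snd x), fst x, - snd (Zf (snd x))))
      \<in> measurable (borel \<Otimes>\<^sub>M N) (borel \<Otimes>\<^sub>M (borel \<Otimes>\<^sub>M borel))"
    by measurable
  from measurable_compose[OF this S]
  have [measurable]: "(\<lambda>x. sgd_step q B \<eta> k (Zf (snd x)) (fst x) is (- snd (Zf (snd x))))
      \<in> borel_measurable (borel \<Otimes>\<^sub>M N)" for "is"
    by simp
  show ?thesis
    unfolding nn_integral_gaerr_step phi_est_nn_sum_def split_beta by measurable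
qed

locale bounded_examples =
  fixes D :: "((real^'d::finite) \<times> real) measure" and B :: real
  assumes prob_space_D: "prob_space D" and sets_D: "sets D = sets borel"
    and AE_bounded: "AE z in D. norm (fst z) \<le> 1 \<and> \<bar>snd z\<bar> \<le> B" and B_pos: "B > 0"
begin

interpretation D: prob_space D by (rule prob_space_D)

lemma borel_measurable_D:
  fixes f :: "_ \<Rightarrow> 'b::topological_space"
  shows "f \<in> borel_measurable borel \<Longrightarrow> f \<in> borel_measurable D"
  using measurable_cong_sets[OF sets_D refl, where N="borel :: 'b measure"] by simp

lemma measurable_D_iff: "f \<in> measurable N D \<longleftrightarrow> f \<in> measurable N borel"
  using measurable_cong_sets[OF refl sets_D, of N] by simp

lemma integrable_D_bounded:
  fixes f :: "_ \<Rightarrow> real"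
  assumes "f \<in> borel_measurable borel"
    and "\<And>z. norm (fst z) \<le> 1 \<Longrightarrow> \<bar>snd z\<bar> \<le> B \<Longrightarrow> \<bar>f z\<bar> \<le> c"
  shows "integrable D f"
proof (rule D.integrable_const_bound[where B=c])
  show "AE z in D. norm (f z) \<le> c" using AE_bounded by eventually_elim (auto intro: assms(2))
qed (intro borel_measurable_D assms(1))

lemma abs_residual_le: "norm (fst z) \<le> 1 \<Longrightarrow> \<bar>snd z\<bar> \<le> B \<Longrightarrow> \<bar>w \<bullet> fst z - snd z\<bar> \<le> norm w + B"
  using Cauchy_Schwarz_ineq2[of w "fst z"] mult_left_mono[of "norm (fst z)" 1 "norm w"] by simp

lemma integrable_sq_loss: "integrable D (sq_loss w)"
proof (rule integrable_D_bounded[where c="(norm w + B)^2 / 2"])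
  show "sq_loss w \<in> borel_measurable borel"
    unfolding sq_loss_def by (intro borel_measurable_continuous_onI continuous_intros)
  fix z :: "(real^'d) \<times> real" assume "norm (fst z) \<le> 1" "\<bar>snd z\<bar> \<le> B"
  then have "(w \<bullet> fst z - snd z)^2 \<le> (norm w + B)^2"
    using abs_residual_le by (metis abs_ge_zero power2_abs power_mono)
  then show "\<bar>sq_loss w z\<bar> \<le> (norm w + B)^2 / 2" by (simp add: sq_loss_def)
qed

lemma risk_nonneg: "risk D w \<ge> 0"
  unfolding risk_def sq_loss_def by (intro integral_nonneg_AE) auto

lemma borel_measurable_risk: "(\<lambda>w. risk D w) \<in> borel_measurable borel"
proof -
  have "continuous_on UNIV (\<lambda>(w, z). sq_loss w z)"
    unfolding sq_loss_def split_beta by (intro continuous_intros)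
  then have "(\<lambda>(w, z). sq_loss w z) \<in> borel_measurable (borel \<Otimes>\<^sub>M borel)"
    using borel_measurable_continuous_onI by (simp add: borel_prod)
  then have "(\<lambda>(w, z). sq_loss w z) \<in> borel_measurable (borel \<Otimes>\<^sub>M D)"
    by (subst measurable_cong_sets[OF sets_pair_measure_cong[OF refl sets_D] refl])
  then show ?thesis unfolding risk_def by (rule D.borel_measurable_lebesgue_integral)
qed

lemma integrable_coord_sq: "integrable D (\<lambda>z. (fst z $ j)^2)"
proof (rule integrable_D_bounded[where c=1])
  fix z :: "(real^'d) \<times> real" assume "norm (fst z) \<le> 1"
  then have "\<bar>fst z $ j\<bar> \<le> 1" using component_le_norm_cart[of "fst z" j] by linarith
  then show "\<bar>(fst z $ j)^2\<bar> \<le> 1" by (simp add: abs_square_le_1)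
qed (intro borel_measurable_continuous_onI continuous_intros)

lemma second_moment_nonneg: "second_moment D j \<ge> 0"
  unfolding second_moment_def by (intro integral_nonneg_AE) auto

lemma AE_coord_eq_0: "second_moment D j = 0 \<Longrightarrow> AE z in D. fst z $ j = 0"
  using integral_nonneg_eq_0_iff_AE[OF integrable_coord_sq[of j]] unfolding second_moment_def by simp

abbreviation moment_root_sum :: real where
  "moment_root_sum \<equiv> \<Sum>j\<in>UNIV. sqrt (second_moment D j)"

lemma pmf_ddaerr_q:
  "pmf (ddaerr_q D) j =
     (if moment_root_sum = 0 then 1 / real CARD('d) else sqrt (second_moment D j) / moment_root_sum)"
proof (cases "moment_root_sum = 0")
  case True then show ?thesis by (simp add: ddaerr_q_def Let_def)
next
  case False
  then have pos: "moment_root_sum > 0"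
    using sum_nonneg[of UNIV "\<lambda>j. sqrt (second_moment D j)"] second_moment_nonneg by force
  have "pmf (embed_pmf (\<lambda>i. sqrt (second_moment D i) / moment_root_sum)) j = sqrt (second_moment D j) / moment_root_sum"
  proof (rule pmf_embed_pmf)
    have "(\<Sum>i\<in>UNIV. sqrt (second_moment D i) / moment_root_sum) = 1"
      using False by (simp add: sum_divide_distrib[symmetric])
    then show "(\<integral>\<^sup>+ x. ennreal (sqrt (second_moment D x) / moment_root_sum) \<partial>count_space UNIV) = 1"
      by (simp add: nn_integral_count_space_finite sum_nonneg pos second_moment_nonneg)
  qed (use pos second_moment_nonneg in simp)
  then show ?thesis using False by (simp add: ddaerr_q_def Let_def)
qed

lemma second_moment_eq_0_if_pmf_ddaerr_q_eq_0: "pmf (ddaerr_q D) j = 0 \<Longrightarrow> second_moment D j = 0"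
  by (cases "moment_root_sum = 0") (auto simp: pmf_ddaerr_q second_moment_nonneg)

text \<open>This is where DDAERR's choice of \<open>q\<close> enters: it minimises \<open>\<Sum>\<^sub>j E[x\<^sub>j\<^sup>2] / q\<^sub>j\<close>, and the
  minimum is the \<open>1/2\<close>-norm of the second moments.\<close>
lemma sum_second_moment_div_pmf_ddaerr_q:
  "(\<Sum>j\<in>UNIV. second_moment D j / pmf (ddaerr_q D) j) \<le> half_norm (second_moment D)"
proof (cases "moment_root_sum = 0")
  case True
  then have "\<And>j. second_moment D j = 0"
    using sum_nonneg_eq_0_iff[of UNIV "\<lambda>j. sqrt (second_moment D j)"] second_moment_nonneg by simp
  then show ?thesis by (simp add: half_norm_def)
next
  case False
  have "(\<Sum>j\<in>UNIV. second_moment D j / pmf (ddaerr_q D) j) = (\<Sum>j\<in>UNIV. moment_root_sum * sqrt (second_moment D j))"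
  proof (intro sum.cong refl)
    fix j
    have "sqrt (second_moment D j) * sqrt (second_moment D j) = second_moment D j"
      using second_moment_nonneg[of j] by simp
    then show "second_moment D j / pmf (ddaerr_q D) j = moment_root_sum * sqrt (second_moment D j)"
      using False by (cases "second_moment D j = 0") (simp_all add: pmf_ddaerr_q field_simps)
  qed
  also have "\<dots> = half_norm (second_moment D)"
    by (simp add: half_norm_def sum_distrib_left[symmetric] power2_eq_square second_moment_nonneg)
  finally show ?thesis by simp
qed

lemma AE_support_part_ddaerr_q: "AE z in D. support_part (ddaerr_q D) (fst z) = fst z"
proof -
  have "AE z in D. pmf (ddaerr_q D) j = 0 \<longrightarrow> fst z $ j = 0" for j
    by (cases "pmf (ddaerr_q D) j = 0")
       (simp_all add: AE_coord_eq_0 second_moment_eq_0_if_pmf_ddaerr_q_eq_0)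
  then have "AE z in D. \<forall>j\<in>UNIV. pmf (ddaerr_q D) j = 0 \<longrightarrow> fst z $ j = 0"
    by (subst AE_finite_all) auto
  then show ?thesis
    by eventually_elim (auto simp: support_part_def vec_eq_iff)
qed

lemma integrable_inverse_weighted_sqnorm: "integrable D (\<lambda>z. inverse_weighted_sqnorm q (fst z))"
  unfolding inverse_weighted_sqnorm_def
  by (intro Bochner_Integration.integrable_sum integrable_divide_zero integrable_coord_sq)

lemma integral_inverse_weighted_sqnorm:
  "(\<integral>z. inverse_weighted_sqnorm q (fst z) \<partial>D) = (\<Sum>j\<in>UNIV. second_moment D j / pmf q j)"
  unfolding inverse_weighted_sqnorm_def second_moment_def
  by (subst Bochner_Integration.integral_sum) (auto intro!: integrable_coord_sq)

lemma integrable_sqnorm: "integrable D (\<lambda>z. (norm (fst z))^2)"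
proof (rule integrable_D_bounded[where c=1])
  show "(\<lambda>z::(real^'d) \<times> real. (norm (fst z))^2) \<in> borel_measurable borel"
    by (intro borel_measurable_continuous_onI continuous_intros)
qed (simp add: abs_square_le_1)

lemma integral_sqnorm_le: "(\<integral>z. (norm (fst z))^2 \<partial>D) \<le> 1"
proof -
  have "(\<integral>z. (norm (fst z))^2 \<partial>D) \<le> (\<integral>z. 1 \<partial>D)"
    using AE_bounded by (intro integral_mono_AE integrable_sqnorm) (auto elim!: eventually_mono simp: abs_square_le_1)
  then show ?thesis by (simp add: D.prob_space)
qed

lemma integrable_gradient_inner:
  "integrable D (\<lambda>z. (w \<bullet> fst z - snd z) * (support_part q (fst z) \<bullet> d))"
proof (rule integrable_D_bounded[where c="(norm w + B) * norm d"])
  show "(\<lambda>z::(real^'d) \<times> real. (w \<bullet> fst z - snd z) * (support_part q (fst z) \<bullet> d)) \<in> borel_measurable borel"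
    unfolding support_part_def divide_inverse by (intro borel_measurable_continuous_onI continuous_intros)
  fix z :: "(real^'d) \<times> real" assume z: "norm (fst z) \<le> 1" "\<bar>snd z\<bar> \<le> B"
  have "\<bar>support_part q (fst z) \<bullet> d\<bar> \<le> norm (support_part q (fst z)) * norm d"
    by (rule Cauchy_Schwarz_ineq2)
  also have "\<dots> \<le> norm d"
    using z norm_support_part_le[of q "fst z"] mult_right_mono[of "norm (support_part q (fst z))" 1 "norm d"] by simp
  finally show "\<bar>(w \<bullet> fst z - snd z) * (support_part q (fst z) \<bullet> d)\<bar> \<le> (norm w + B) * norm d"
    unfolding abs_mult using abs_residual_le[OF z] B_pos by (intro mult_mono) auto
qed

text \<open>Convexity of the loss; on the support of \<open>D\<close> the vector \<open>support_part (ddaerr_q D) x\<close> is \<open>x\<close>,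
  so the integrand is the loss gradient paired with \<open>w - u\<close>.\<close>
lemma risk_diff_le_integral_gradient:
  "risk D w - risk D u \<le> (\<integral>z. (w \<bullet> fst z - snd z) * (support_part (ddaerr_q D) (fst z) \<bullet> (w - u)) \<partial>D)"
proof -
  have "risk D w - risk D u = (\<integral>z. sq_loss w z - sq_loss u z \<partial>D)"
    unfolding risk_def by (simp add: integrable_sq_loss)
  also have "\<dots> \<le> (\<integral>z. (w \<bullet> fst z - snd z) * (support_part (ddaerr_q D) (fst z) \<bullet> (w - u)) \<partial>D)"
    using AE_support_part_ddaerr_q
  proof (intro integral_mono_AE integrable_gradient_inner, simp add: integrable_sq_loss, eventually_elim)
    case (elim z)
    define a where "a = w \<bullet> fst z"
    define b where "b = u \<bullet> fst z"
    have "(a - snd z) * (a - b) - ((1/2) * (a - snd z)^2 - (1/2) * (b - snd z)^2) = (1/2) * (a - b)^2"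
      by (simp add: power2_eq_square algebra_simps)
    moreover have "(1/2) * (a - b)^2 \<ge> 0" by simp
    ultimately have "(1/2) * (a - snd z)^2 - (1/2) * (b - snd z)^2 \<le> (a - snd z) * (a - b)"
      by linarith
    then show ?case
      using elim by (simp add: sq_loss_def a_def b_def inner_diff_right inner_commute)
  qed
  finally show ?thesis .
qed

lemma integrable_step_bound: "integrable D (step_bound q B \<eta> k u w)"
  unfolding step_bound_def
  using integrable_gradient_inner integrable_inverse_weighted_sqnorm integrable_sqnorm
  by (intro Bochner_Integration.integrable_add Bochner_Integration.integrable_diff
      integrable_mult_right integrable_divide_zero) simp_all

lemma integral_step_bound_le:
  assumes "k > 0" "\<eta> > 0"
  shows "(\<integral>z. step_bound (ddaerr_q D) B \<eta> k u w z \<partial>D) \<le> (norm (w - u))^2 - 2 * \<eta> * (risk D w - risk D u)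
    + \<eta>^2 * (4 * B^2) * (half_norm (second_moment D) / real k + 1)"
proof -
  define g where "g z = (w \<bullet> fst z - snd z) * (support_part (ddaerr_q D) (fst z) \<bullet> (w - u))" for z
  define A where "A z = inverse_weighted_sqnorm (ddaerr_q D) (fst z)" for z :: "(real^'d) \<times> real"
  have int: "integrable D g" "integrable D A"
    unfolding g_def A_def by (rule integrable_gradient_inner integrable_inverse_weighted_sqnorm)+
  have "(\<integral>z. step_bound (ddaerr_q D) B \<eta> k u w z \<partial>D) = (\<integral>z. (norm (w - u))^2 - 2 * \<eta> * g z
      + \<eta>^2 * (4 * B^2) * (A z / real k + (norm (fst z))^2) \<partial>D)"
    by (simp add: step_bound_def g_def A_def)
  also have "\<dots> = (norm (w - u))^2 - 2 * \<eta> * (\<integral>z. g z \<partial>D)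
      + \<eta>^2 * (4 * B^2) * ((\<integral>z. A z \<partial>D) / real k + (\<integral>z. (norm (fst z))^2 \<partial>D))"
    using int integrable_sqnorm
    by (simp add: D.prob_space)
  also have "\<dots> \<le> (norm (w - u))^2 - 2 * \<eta> * (risk D w - risk D u)
      + \<eta>^2 * (4 * B^2) * (half_norm (second_moment D) / real k + 1)"
  proof (rule add_mono)
    have "risk D w - risk D u \<le> (\<integral>z. g z \<partial>D)"
      unfolding g_def by (rule risk_diff_le_integral_gradient)
    then show "(norm (w - u))^2 - 2 * \<eta> * (\<integral>z. g z \<partial>D) \<le> (norm (w - u))^2 - 2 * \<eta> * (risk D w - risk D u)"
      using assms(2) by (intro diff_left_mono mult_left_mono) auto
    have "(\<integral>z. A z \<partial>D) / real k + (\<integral>z. (norm (fst z))^2 \<partial>D) \<le> half_norm (second_moment D) / real k + 1"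
      using integral_inverse_weighted_sqnorm sum_second_moment_div_pmf_ddaerr_q integral_sqnorm_le assms(1)
      unfolding A_def by (intro add_mono divide_right_mono) auto
    then show "\<eta>^2 * (4 * B^2) * ((\<integral>z. A z \<partial>D) / real k + (\<integral>z. (norm (fst z))^2 \<partial>D))
        \<le> \<eta>^2 * (4 * B^2) * (half_norm (second_moment D) / real k + 1)"
      by (rule mult_left_mono) simp
  qed
  finally show ?thesis .
qed

text \<open>One step of the online gradient descent argument, averaged over the example.\<close>
lemma nn_integral_risk_plus_potential_le:
  assumes "norm w \<le> B" "norm u \<le> B" "k > 0" "\<eta> > 0" "K \<ge> 0"
  shows "(\<integral>\<^sup>+z. ennreal (risk D w) + (\<integral>\<^sup>+w'. ennreal (K + (1 / (2 * \<eta>)) * (norm (w' - u))^2) \<partial>gaerr_step (ddaerr_q D) B \<eta> k z w) \<partial>D)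
     \<le> ennreal (K + risk D u + \<eta> * (2 * B^2 * (half_norm (second_moment D) / real k + 1)) + (1 / (2 * \<eta>)) * (norm (w - u))^2)"
proof -
  define F where "F z = risk D w + (K + (1 / (2 * \<eta>)) * step_bound (ddaerr_q D) B \<eta> k u w z)" for z
  have F: "AE z in D. ennreal (risk D w) + (\<integral>\<^sup>+w'. ennreal (K + (1 / (2 * \<eta>)) * (norm (w' - u))^2)
      \<partial>gaerr_step (ddaerr_q D) B \<eta> k z w) \<le> ennreal (F z) \<and> 0 \<le> F z"
    using AE_bounded
  proof eventually_elim
    case (elim z)
    have sb: "0 \<le> step_bound (ddaerr_q D) B \<eta> k u w z"
      using step_bound_nonneg[OF assms(1)] elim assms(3) by auto
    have "(\<integral>\<^sup>+w'. ennreal (K + (1 / (2 * \<eta>)) * (norm (w' - u))^2) \<partial>gaerr_step (ddaerr_q D) B \<eta> k z w)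
        \<le> ennreal (K + (1 / (2 * \<eta>)) * step_bound (ddaerr_q D) B \<eta> k u w z)"
      using elim assms by (intro nn_integral_gaerr_step_affine_le B_pos) auto
    then show ?case
      using sb assms(4,5) risk_nonneg[of w] by (auto simp: F_def add_left_mono)
  qed
  have "integrable D F"
    unfolding F_def by (intro Bochner_Integration.integrable_add integrable_mult_right integrable_step_bound) simp_all
  then have "(\<integral>\<^sup>+z. ennreal (risk D w) + (\<integral>\<^sup>+w'. ennreal (K + (1 / (2 * \<eta>)) * (norm (w' - u))^2)
      \<partial>gaerr_step (ddaerr_q D) B \<eta> k z w) \<partial>D) \<le> ennreal (\<integral>z. F z \<partial>D)"
    using F by (subst nn_integral_eq_integral[symmetric]) (auto intro!: nn_integral_mono_AE elim: eventually_mono)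
  also have "(\<integral>z. F z \<partial>D) = risk D w + K + (1 / (2 * \<eta>)) * (\<integral>z. step_bound (ddaerr_q D) B \<eta> k u w z \<partial>D)"
    unfolding F_def using integrable_step_bound by (simp add: D.prob_space)
  also have "\<dots> \<le> risk D w + K + (1 / (2 * \<eta>)) * ((norm (w - u))^2 - 2 * \<eta> * (risk D w - risk D u)
      + \<eta>^2 * (4 * B^2) * (half_norm (second_moment D) / real k + 1))"
    using integral_step_bound_le[OF assms(3,4), of u w] assms(4) by (intro add_left_mono mult_left_mono) auto
  also have "\<dots> = K + risk D u + \<eta> * (2 * B^2 * (half_norm (second_moment D) / real k + 1)) + (1 / (2 * \<eta>)) * (norm (w - u))^2"
    using assms(4) by (simp add: field_simps power2_eq_square)
  finally show ?thesis by (simp add: ennreal_leI)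
qed

end

section \<open>The expected cumulative risk of the iterates\<close>

definition risk_sum :: "((real^'d::finite) \<times> real) measure \<Rightarrow> (real^'d) list \<Rightarrow> ennreal" where
  "risk_sum D ws = sum_list (map (\<lambda>v. ennreal (risk D v)) ws)"

definition expected_risk_sum ::
  "((real^'d::finite) \<times> real) measure \<Rightarrow> 'd pmf \<Rightarrow> real \<Rightarrow> real \<Rightarrow> nat \<Rightarrow> real^'d \<Rightarrow> ((real^'d) \<times> real) list \<Rightarrow> ennreal"
where
  "expected_risk_sum D q B \<eta> k w zs = (\<integral>\<^sup>+ws. risk_sum D ws \<partial>gaerr_iter q B \<eta> k w zs)"

lemma expected_risk_sum_Nil: "expected_risk_sum D q B \<eta> k w [] = 0"
  by (simp add: expected_risk_sum_def risk_sum_def)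

lemma expected_risk_sum_Cons: "expected_risk_sum D q B \<eta> k w (z # zs) =
  ennreal (risk D w) + (\<integral>\<^sup>+w'. expected_risk_sum D q B \<eta> k w' zs \<partial>gaerr_step q B \<eta> k z w)"
proof -
  have "expected_risk_sum D q B \<eta> k w (z # zs) =
      (\<integral>\<^sup>+w'. (\<integral>\<^sup>+ws. ennreal (risk D w) + risk_sum D ws \<partial>gaerr_iter q B \<eta> k w' zs) \<partial>gaerr_step q B \<eta> k z w)"
    by (simp add: expected_risk_sum_def risk_sum_def)
  also have "\<dots> = (\<integral>\<^sup>+w'. ennreal (risk D w) + expected_risk_sum D q B \<eta> k w' zs \<partial>gaerr_step q B \<eta> k z w)"
    by (simp add: expected_risk_sum_def nn_integral_add measure_pmf.emeasure_space_1)
  finally show ?thesis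
    by (simp add: nn_integral_add measure_pmf.emeasure_space_1)
qed

lemma risk_sum_eq_ennreal: "(\<And>v. risk D v \<ge> 0) \<Longrightarrow> risk_sum D ws = ennreal (sum_list (map (risk D) ws))"
  unfolding risk_sum_def
proof (induction ws)
  case (Cons v ws)
  have "0 \<le> sum_list (map (risk D) ws)" by (rule sum_list_nonneg) (auto simp: Cons.prems)
  with Cons show ?case by simp
qed simp

lemma nn_integral_measure_pmf_swap:
  fixes p :: "'a::topological_space pmf"
  assumes "sigma_finite_measure M" "(\<lambda>(x, y). f x y) \<in> borel_measurable (borel \<Otimes>\<^sub>M M)"
  shows "(\<integral>\<^sup>+y. (\<integral>\<^sup>+x. f x y \<partial>p) \<partial>M) = (\<integral>\<^sup>+x. (\<integral>\<^sup>+y. f x y \<partial>M) \<partial>p)"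
proof -
  interpret pair_sigma_finite "measure_pmf p" M
    by (intro pair_sigma_finite.intro measure_pmf.sigma_finite_measure_axioms assms(1))
  have "(\<lambda>v. (fst v, snd v)) \<in> measurable (measure_pmf p \<Otimes>\<^sub>M M) (borel \<Otimes>\<^sub>M M)"
  proof (intro measurable_Pair)
    have "(\<lambda>x. x) \<in> measurable (measure_pmf p) (borel :: 'a measure)" by simp
    from measurable_compose[OF measurable_fst this]
    show "fst \<in> borel_measurable (measure_pmf p \<Otimes>\<^sub>M M)" .
  qed simp
  from measurable_compose[OF this assms(2)]
  have "(\<lambda>(x, y). f x y) \<in> borel_measurable (measure_pmf p \<Otimes>\<^sub>M M)"
    by (simp add: split_beta)
  then show ?thesis by (rule Fubini')
qed

context bounded_examples
begin

interpretation D: prob_space D by (rule prob_space_D)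

lemma borel_measurable_expected_risk_sum:
  assumes "set is \<subseteq> I"
  shows "(\<lambda>(w, y). expected_risk_sum D q B \<eta> k w (map y is)) \<in> borel_measurable (borel \<Otimes>\<^sub>M PiM I (\<lambda>_. D))"
  using assms
proof (induction "is")
  case Nil then show ?case by (simp add: expected_risk_sum_Nil)
next
  case (Cons i "is")
  have "(\<lambda>y. y i) \<in> measurable (PiM I (\<lambda>_. D)) D"
    by (rule measurable_component_singleton) (use Cons.prems in auto)
  then have "(\<lambda>y. y i) \<in> measurable (PiM I (\<lambda>_. D)) borel"
    using measurable_D_iff by blast
  then have "(\<lambda>(w, y). \<integral>\<^sup>+w'. expected_risk_sum D q B \<eta> k w' (map y is) \<partial>gaerr_step q B \<eta> k (y i) w)
      \<in> borel_measurable (borel \<Otimes>\<^sub>M PiM I (\<lambda>_. D))"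
    using Cons by (intro borel_measurable_nn_integral_gaerr_step B_pos) auto
  moreover have "(\<lambda>x. ennreal (risk D (fst x))) \<in> borel_measurable (borel \<Otimes>\<^sub>M PiM I (\<lambda>_. D))"
    using borel_measurable_risk by measurable
  ultimately show ?case
    unfolding list.map expected_risk_sum_Cons by (simp add: split_beta)
qed

text \<open>The sample is a product measure, so the first example can be integrated out last.\<close>
lemma nn_integral_expected_risk_sum_Cons:
  assumes "finite I" "set is \<subseteq> I" "i \<notin> I"
  shows "(\<integral>\<^sup>+y. expected_risk_sum D q B \<eta> k w (map y (i # is)) \<partial>PiM (insert i I) (\<lambda>_. D))
    = (\<integral>\<^sup>+x. ennreal (risk D w) + (\<integral>\<^sup>+w'. (\<integral>\<^sup>+y. expected_risk_sum D q B \<eta> k w' (map y is) \<partial>PiM I (\<lambda>_. D))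
        \<partial>gaerr_step q B \<eta> k x w) \<partial>D)"
proof -
  interpret PS: product_sigma_finite "\<lambda>_. D" by unfold_locales
  interpret PI: prob_space "PiM I (\<lambda>_. D)" by (rule prob_space_PiM) (rule prob_space_D)
  have mI: "(\<lambda>(w, y). expected_risk_sum D q B \<eta> k w (map y is)) \<in> borel_measurable (borel \<Otimes>\<^sub>M PiM I (\<lambda>_. D))"
    by (rule borel_measurable_expected_risk_sum) (rule assms(2))
  have "(\<lambda>(w, y). expected_risk_sum D q B \<eta> k w (map y (i # is))) \<in> borel_measurable (borel \<Otimes>\<^sub>M PiM (insert i I) (\<lambda>_. D))"
    by (rule borel_measurable_expected_risk_sum) (use assms(2) in auto)
  from measurable_Pair2[OF this, of w]
  have "(\<lambda>y. expected_risk_sum D q B \<eta> k w (map y (i # is))) \<in> borel_measurable (PiM (insert i I) (\<lambda>_. D))"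
    by simp
  then have "(\<integral>\<^sup>+y. expected_risk_sum D q B \<eta> k w (map y (i # is)) \<partial>PiM (insert i I) (\<lambda>_. D))
      = (\<integral>\<^sup>+x. (\<integral>\<^sup>+y. expected_risk_sum D q B \<eta> k w (map (y(i := x)) (i # is)) \<partial>PiM I (\<lambda>_. D)) \<partial>D)"
    using PS.product_nn_integral_insert_rev[OF assms(1,3)] by simp
  also have "\<dots> = (\<integral>\<^sup>+x. ennreal (risk D w) + (\<integral>\<^sup>+w'. (\<integral>\<^sup>+y. expected_risk_sum D q B \<eta> k w' (map y is) \<partial>PiM I (\<lambda>_. D))
        \<partial>gaerr_step q B \<eta> k x w) \<partial>D)"
  proof (intro nn_integral_cong)
    fix x :: "(real^'d) \<times> real"
    have map_upd: "map (y(i := x)) (i # is) = x # map y is" for y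
      using assms(2,3) by auto
    have "(\<lambda>(w, y). \<integral>\<^sup>+w'. expected_risk_sum D q B \<eta> k w' (map y is) \<partial>gaerr_step q B \<eta> k x w)
        \<in> borel_measurable (borel \<Otimes>\<^sub>M PiM I (\<lambda>_. D))"
      using borel_measurable_nn_integral_gaerr_step[OF B_pos mI, of "\<lambda>_. x"] by simp
    from measurable_Pair2[OF this, of w]
    have "(\<integral>\<^sup>+y. ennreal (risk D w) + (\<integral>\<^sup>+w'. expected_risk_sum D q B \<eta> k w' (map y is) \<partial>gaerr_step q B \<eta> k x w) \<partial>PiM I (\<lambda>_. D))
       = ennreal (risk D w) + (\<integral>\<^sup>+y. (\<integral>\<^sup>+w'. expected_risk_sum D q B \<eta> k w' (map y is) \<partial>gaerr_step q B \<eta> k x w) \<partial>PiM I (\<lambda>_. D))"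
      by (simp add: nn_integral_add PI.emeasure_space_1)
    also have "(\<integral>\<^sup>+y. (\<integral>\<^sup>+w'. expected_risk_sum D q B \<eta> k w' (map y is) \<partial>gaerr_step q B \<eta> k x w) \<partial>PiM I (\<lambda>_. D))
      = (\<integral>\<^sup>+w'. (\<integral>\<^sup>+y. expected_risk_sum D q B \<eta> k w' (map y is) \<partial>PiM I (\<lambda>_. D)) \<partial>gaerr_step q B \<eta> k x w)"
      by (rule nn_integral_measure_pmf_swap[OF PI.sigma_finite_measure_axioms mI])
    finally show "(\<integral>\<^sup>+y. expected_risk_sum D q B \<eta> k w (map (y(i := x)) (i # is)) \<partial>PiM I (\<lambda>_. D))
       = ennreal (risk D w) + (\<integral>\<^sup>+w'. (\<integral>\<^sup>+y. expected_risk_sum D q B \<eta> k w' (map y is) \<partial>PiM I (\<lambda>_. D)) \<partial>gaerr_step q B \<eta> k x w)"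
      unfolding map_upd expected_risk_sum_Cons .
  qed
  finally show ?thesis .
qed

lemma nn_integral_expected_risk_sum_le:
  assumes "norm u \<le> B" "k > 0" "\<eta> > 0"
  shows "distinct is \<Longrightarrow> norm w \<le> B \<Longrightarrow>
    (\<integral>\<^sup>+y. expected_risk_sum D (ddaerr_q D) B \<eta> k w (map y is) \<partial>PiM (set is) (\<lambda>_. D))
      \<le> ennreal (real (length is) * (risk D u + \<eta> * (2 * B^2 * (half_norm (second_moment D) / real k + 1)))
           + (1 / (2 * \<eta>)) * (norm (w - u))^2)"
proof (induction "is" arbitrary: w)
  case Nil then show ?case by (simp add: expected_risk_sum_Nil)
next
  case (Cons i "is")
  define C where "C = \<eta> * (2 * B^2 * (half_norm (second_moment D) / real k + 1))"
  define K where "K = real (length is) * (risk D u + C)"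
  have "C \<ge> 0" unfolding C_def using assms(3) by (auto simp: half_norm_def)
  then have K: "K \<ge> 0" unfolding K_def using risk_nonneg[of u] by simp
  have "(\<integral>\<^sup>+y. expected_risk_sum D (ddaerr_q D) B \<eta> k w (map y (i # is)) \<partial>PiM (set (i # is)) (\<lambda>_. D))
      = (\<integral>\<^sup>+x. ennreal (risk D w) + (\<integral>\<^sup>+w'. (\<integral>\<^sup>+y. expected_risk_sum D (ddaerr_q D) B \<eta> k w' (map y is)
          \<partial>PiM (set is) (\<lambda>_. D)) \<partial>gaerr_step (ddaerr_q D) B \<eta> k x w) \<partial>D)"
    using nn_integral_expected_risk_sum_Cons[of "set is" "is" i] Cons.prems by simp
  also have "\<dots> \<le> (\<integral>\<^sup>+x. ennreal (risk D w) + (\<integral>\<^sup>+w'. ennreal (K + (1 / (2 * \<eta>)) * (norm (w' - u))^2)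
      \<partial>gaerr_step (ddaerr_q D) B \<eta> k x w) \<partial>D)"
  proof (intro nn_integral_mono add_left_mono nn_integral_mono_AE, unfold AE_measure_pmf_iff, intro ballI)
    fix x w' assume "w' \<in> set_pmf (gaerr_step (ddaerr_q D) B \<eta> k x w)"
    then have "norm w' \<le> B" by (rule norm_le_if_in_set_pmf_gaerr_step[OF B_pos])
    with Cons.IH[of w'] Cons.prems
    show "(\<integral>\<^sup>+y. expected_risk_sum D (ddaerr_q D) B \<eta> k w' (map y is) \<partial>PiM (set is) (\<lambda>_. D))
        \<le> ennreal (K + (1 / (2 * \<eta>)) * (norm (w' - u))^2)"
      by (simp add: K_def C_def)
  qed
  also have "\<dots> \<le> ennreal (K + risk D u + C + (1 / (2 * \<eta>)) * (norm (w - u))^2)"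
    unfolding C_def by (rule nn_integral_risk_plus_potential_le[OF Cons.prems(2) assms K])
  also have "K + risk D u + C = real (length (i # is)) * (risk D u + C)"
    by (simp add: K_def algebra_simps)
  finally show ?case by (simp add: C_def)
qed

lemma risk_mean_le:
  assumes "ws \<noteq> []"
  shows "risk D ((1 / real (length ws)) *\<^sub>R sum_list ws) \<le> (1 / real (length ws)) * sum_list (map (risk D) ws)"
proof -
  define n where "n = length ws"
  have n: "n > 0" using assms by (simp add: n_def)
  have sum_ws: "sum_list ws = (\<Sum>t<n. ws ! t)" "sum_list (map (risk D) ws) = (\<Sum>t<n. risk D (ws ! t))"
    unfolding n_def by (simp_all add: sum_list_sum_nth atLeast0LessThan)
  have pointwise: "sq_loss ((1 / real n) *\<^sub>R sum_list ws) z \<le> (1 / real n) * (\<Sum>t<n. sq_loss (ws ! t) z)" for z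
  proof -
    define b where "b t = ws ! t \<bullet> fst z - snd z" for t
    have "(\<Sum>t<n. 1 * b t)^2 \<le> (\<Sum>t<n. 1^2) * (\<Sum>t<n. (b t)^2)"
      by (rule Cauchy_Schwarz_ineq_sum)
    then have cs: "((1 / real n) * (\<Sum>t<n. b t))^2 \<le> (1 / real n) * (\<Sum>t<n. (b t)^2)"
      using n by (simp add: power2_eq_square divide_le_eq field_simps)
    have mean: "(1 / real n) *\<^sub>R sum_list ws \<bullet> fst z - snd z = (1 / real n) * (\<Sum>t<n. b t)"
      using n by (simp add: sum_ws b_def inner_sum_left sum_subtractf field_simps)
    have "(\<Sum>t<n. sq_loss (ws ! t) z) = (1/2) * (\<Sum>t<n. (b t)^2)"
      by (simp add: sq_loss_def b_def sum_distrib_left)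
    then show ?thesis unfolding sq_loss_def mean using cs by simp
  qed
  have "risk D ((1 / real n) *\<^sub>R sum_list ws) \<le> (\<integral>z. (1 / real n) * (\<Sum>t<n. sq_loss (ws ! t) z) \<partial>D)"
    unfolding risk_def
    by (intro integral_mono pointwise integrable_sq_loss integrable_mult_right Bochner_Integration.integrable_sum)
  also have "\<dots> = (1 / real n) * (\<Sum>t<n. risk D (ws ! t))"
    unfolding risk_def by (simp add: integrable_sq_loss Bochner_Integration.integral_sum)
  finally show ?thesis unfolding sum_ws n_def .
qed

lemma nn_integral_risk_gaerr_le:
  assumes "zs \<noteq> []"
  shows "(\<integral>\<^sup>+w. ennreal (risk D w) \<partial>gaerr q B \<eta> k w1 zs)
    \<le> ennreal (1 / real (length zs)) * expected_risk_sum D q B \<eta> k w1 zs"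
proof -
  have "(\<integral>\<^sup>+w. ennreal (risk D w) \<partial>gaerr q B \<eta> k w1 zs)
      = (\<integral>\<^sup>+ws. ennreal (risk D ((1 / real (length ws)) *\<^sub>R sum_list ws)) \<partial>gaerr_iter q B \<eta> k w1 zs)"
    by (simp add: gaerr_def)
  also have "\<dots> \<le> (\<integral>\<^sup>+ws. ennreal (1 / real (length zs)) * risk_sum D ws \<partial>gaerr_iter q B \<eta> k w1 zs)"
  proof (rule nn_integral_mono_AE, unfold AE_measure_pmf_iff, intro ballI)
    fix ws assume "ws \<in> set_pmf (gaerr_iter q B \<eta> k w1 zs)"
    then have len: "length ws = length zs" by (rule length_if_in_set_pmf_gaerr_iter)
    then have "ws \<noteq> []" using assms by auto
    from risk_mean_le[OF this]
    have "risk D ((1 / real (length ws)) *\<^sub>R sum_list ws) \<le> (1 / real (length zs)) * sum_list (map (risk D) ws)"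
      by (simp only: len)
    moreover have "0 \<le> sum_list (map (risk D) ws)" by (rule sum_list_nonneg) (auto simp: risk_nonneg)
    ultimately show "ennreal (risk D ((1 / real (length ws)) *\<^sub>R sum_list ws)) \<le> ennreal (1 / real (length zs)) * risk_sum D ws"
      by (auto simp: risk_sum_eq_ennreal risk_nonneg ennreal_mult[symmetric] intro: ennreal_leI)
  qed
  also have "\<dots> = ennreal (1 / real (length zs)) * expected_risk_sum D q B \<eta> k w1 zs"
    by (simp add: expected_risk_sum_def nn_integral_cmult)
  finally show ?thesis .
qed

lemma nn_integral_risk_ddaerr_le:
  assumes "norm w1 \<le> B" "norm u \<le> B" "k > 0" "\<eta> > 0" "m > 0"
  shows "(\<integral>\<^sup>+S. (\<integral>\<^sup>+w. ennreal (risk D w) \<partial>gaerr (ddaerr_q D) B \<eta> k w1 (map S [0..<m])) \<partial>PiM {..<m} (\<lambda>_. D))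
    \<le> ennreal (risk D u + \<eta> * (2 * B^2 * (half_norm (second_moment D) / real k + 1))
        + (norm (w1 - u))^2 / (2 * \<eta> * real m))"
proof -
  define C where "C = \<eta> * (2 * B^2 * (half_norm (second_moment D) / real k + 1))"
  define R where "R = real m * (risk D u + C) + (1 / (2 * \<eta>)) * (norm (w1 - u))^2"
  have "C \<ge> 0" unfolding C_def using assms(4) by (auto simp: half_norm_def)
  then have R: "R \<ge> 0" unfolding R_def using assms(4) risk_nonneg[of u] by simp
  have "(\<lambda>(w, S). expected_risk_sum D (ddaerr_q D) B \<eta> k w (map S [0..<m])) \<in> borel_measurable (borel \<Otimes>\<^sub>M PiM {..<m} (\<lambda>_. D))"
    by (rule borel_measurable_expected_risk_sum) auto
  from measurable_Pair2[OF this, of w1]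
  have meas: "(\<lambda>S. expected_risk_sum D (ddaerr_q D) B \<eta> k w1 (map S [0..<m])) \<in> borel_measurable (PiM {..<m} (\<lambda>_. D))"
    by simp
  have "(\<integral>\<^sup>+S. (\<integral>\<^sup>+w. ennreal (risk D w) \<partial>gaerr (ddaerr_q D) B \<eta> k w1 (map S [0..<m])) \<partial>PiM {..<m} (\<lambda>_. D))
      \<le> (\<integral>\<^sup>+S. ennreal (1 / real m) * expected_risk_sum D (ddaerr_q D) B \<eta> k w1 (map S [0..<m]) \<partial>PiM {..<m} (\<lambda>_. D))"
    using nn_integral_risk_gaerr_le[of "map _ [0..<m]"] assms(5) by (intro nn_integral_mono) simp
  also have "\<dots> = ennreal (1 / real m) * (\<integral>\<^sup>+S. expected_risk_sum D (ddaerr_q D) B \<eta> k w1 (map S [0..<m]) \<partial>PiM {..<m} (\<lambda>_. D))"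
    by (rule nn_integral_cmult[OF meas])
  also have "\<dots> \<le> ennreal (1 / real m) * ennreal R"
    using nn_integral_expected_risk_sum_le[OF assms(2-4), of "[0..<m]" w1] assms(1)
    by (intro mult_left_mono) (auto simp: R_def C_def atLeast0LessThan)
  also have "\<dots> = ennreal ((1 / real m) * R)"
    using R by (simp add: ennreal_mult[symmetric])
  also have "(1 / real m) * R = risk D u + C + (norm (w1 - u))^2 / (2 * \<eta> * real m)"
    using assms(4,5) by (simp add: R_def field_simps)
  finally show ?thesis unfolding C_def .
qed

end

section \<open>Tuning the step size\<close>

lemma tuned_step_size_bound:
  fixes B G d :: real
  assumes "G > 0" "m > 0" "0 \<le> d" "d \<le> 2 * B"
  defines "\<eta> \<equiv> 1 / sqrt (real m * G)"
  shows "\<eta> * (2 * B^2 * G) + d^2 / (2 * \<eta> * real m) \<le> 4 * B^2 / sqrt (real m) * sqrt G"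
proof -
  have m: "sqrt (real m) > 0" and G: "sqrt G > 0" using assms(1,2) by auto
  have "d^2 \<le> (2 * B)^2" using assms(4,3) by (rule power_mono)
  have "\<eta> * (2 * B^2 * G) = 2 * B^2 * sqrt G / sqrt (real m)"
    using m G assms(1) by (simp add: \<eta>_def real_sqrt_mult field_simps)
  moreover have "d^2 / (2 * \<eta> * real m) = d^2 * sqrt G / (2 * sqrt (real m))"
    using m G assms(2) by (simp add: \<eta>_def real_sqrt_mult field_simps)
  moreover have "d^2 * sqrt G / (2 * sqrt (real m)) \<le> (2 * B)^2 * sqrt G / (2 * sqrt (real m))"
    using \<open>d^2 \<le> (2 * B)^2\<close> m G by (intro divide_right_mono mult_right_mono) auto
  moreover have "(2 * B)^2 * sqrt G / (2 * sqrt (real m)) = 2 * B^2 * sqrt G / sqrt (real m)"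
    using m by (simp add: power_mult_distrib)
  moreover have "4 * B^2 / sqrt (real m) * sqrt G = 2 * (2 * B^2 * sqrt G / sqrt (real m))"
    by simp
  ultimately show ?thesis by linarith
qed

theorem theorem2:
  fixes D :: "((real^'d::finite) \<times> real) measure"
    and B :: real and m k :: nat and w1 wstar :: "real^'d"
  assumes "prob_space D"
    and "sets D = sets borel"
    and "AE z in D. norm (fst z) \<le> 1 \<and> \<bar>snd z\<bar> \<le> B"
    and "B > 0" and "m > 0" and "k > 0"
    and "w1 \<noteq> 0" and "norm w1 \<le> B"
    and "norm wstar \<le> B"
  defines "\<eta> \<equiv> 1 / sqrt (real m * (half_norm (second_moment D) / real k + 1))"
  shows "(\<integral>\<^sup>+ S. (\<integral>\<^sup>+ w. ennreal (risk D w)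
              \<partial>measure_pmf (gaerr (ddaerr_q D) B \<eta> k w1 (map S [0..<m])))
          \<partial>(PiM {..<m} (\<lambda>_. D)))
         \<le> ennreal (risk D wstar
              + 4 * B^2 / sqrt (real m) * sqrt (half_norm (second_moment D) / real k + 1))"
proof -
  interpret bounded_examples D B by (rule bounded_examples.intro[OF assms(1-4)])
  define G where "G = half_norm (second_moment D) / real k + 1"
  have G: "G > 0" unfolding G_def half_norm_def by (simp add: add_nonneg_pos)
  have "norm (w1 - wstar) \<le> 2 * B"
    using norm_triangle_ineq4[of w1 wstar] assms(8,9) by simp
  then have "\<eta> * (2 * B^2 * G) + (norm (w1 - wstar))^2 / (2 * \<eta> * real m) \<le> 4 * B^2 / sqrt (real m) * sqrt G"
    unfolding \<eta>_def G_def[symmetric] using G assms(5) by (intro tuned_step_size_bound) auto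
  then have "ennreal (risk D wstar + \<eta> * (2 * B^2 * G) + (norm (w1 - wstar))^2 / (2 * \<eta> * real m))
      \<le> ennreal (risk D wstar + 4 * B^2 / sqrt (real m) * sqrt G)"
    by (intro ennreal_leI) simp
  moreover have "\<eta> > 0" unfolding \<eta>_def G_def[symmetric] using G assms(5) by simp
  ultimately show ?thesis
    using nn_integral_risk_ddaerr_le[OF assms(8,9,6) _ assms(5)] unfolding G_def by (blast intro: order_trans)
qed

end
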